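(* Let $m,n\ge 1$, $k=\min(m,n)$, and let $M^\star\in\mathbb{R}^{m\times n}$ have singular value decomposition $M^\star=P\Sigma Q^\top$ with $P\in\mathbb{R}^{m\times k}$, $Q\in\mathbb{R}^{n\times k}$ having orthonormal columns $p_i,q_i$ and $\Sigma=\mathrm{diag}(\sigma_1,\dots,\sigma_k)$ with $\sigma_1>\sigma_2>\cdots>\sigma_k>0$. For $r\in\{1,\dots,k\}$ let $A_r=\sum_{i=1}^r\sigma_ip_iq_i^\top$, let $\Pi_S$ denote the $k\times k$ diagonal matrix with $(\Pi_S)_{ii}=1$ if $i\in S$ and $0$ otherwise, $[r]=\{1,\dots,r\}$, and for $U\in\mathbb{R}^{m\times k}$, $V\in\mathbb{R}^{n\times k}$ let $$\mathcal{E}(U,V,r)=\min_{S_r\subseteq\{1,\dots,k\},\,|S_r|=r}\bigl\|U\Pi_{S_r}V^\top-A_r\bigr\|_F^2.$$ Let $$\mathcal{M}_{\mathrm{NSL}}=\arg\min_{U\in\mathbb{R}^{m\times k},\,V\in\mathbb{R}^{n\times k}}\frac1k\sum_{r=1}^k\bigl\|U\Pi_{[r]}V^\top-M^\star\bigr\|_F^2.$$ Then for every $(U,V)\in\mathcal{M}_{\mathrm{NSL}}$ and every $r\in\{1,\dots,k\}$, $\mathcal{E}(U,V,r)=0$.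
   Context: $\|\cdot\|_F$ is the Frobenius norm. *)

theory Defs
  imports "Jordan_Normal_Form.Matrix"
begin

definition frob_norm :: "real mat \<Rightarrow> real" where
  "frob_norm A = sqrt (\<Sum>i<dim_row A. \<Sum>j<dim_col A. (A $$ (i,j))\<^sup>2)"

(* \<Pi>_S : k x k diagonal 0/1 matrix; indices are 0-based, S \<subseteq> {0..<k} *)
definition sel_mat :: "nat \<Rightarrow> nat set \<Rightarrow> real mat" where
  "sel_mat k S = mat k k (\<lambda>(i,j). if i = j \<and> i \<in> S then 1 else 0)"

definition diag_sv :: "nat \<Rightarrow> (nat \<Rightarrow> real) \<Rightarrow> real mat" where
  "diag_sv k \<sigma> = mat k k (\<lambda>(i,j). if i = j then \<sigma> i else 0)"

definition trunc_svd :: "nat \<Rightarrow> nat \<Rightarrow> real mat \<Rightarrow> real mat \<Rightarrow> (nat \<Rightarrow> real) \<Rightarrow> nat \<Rightarrow> real mat" where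
  "trunc_svd m n P Q \<sigma> r = mat m n (\<lambda>(a,b). \<Sum>i<r. \<sigma> i * P $$ (a,i) * Q $$ (b,i))"

definition err_E :: "nat \<Rightarrow> real mat \<Rightarrow> real mat \<Rightarrow> real mat \<Rightarrow> nat \<Rightarrow> real" where
  "err_E k U V Ar r = Min {(frob_norm (U * sel_mat k S * transpose_mat V - Ar))\<^sup>2 | S. S \<subseteq> {0..<k} \<and> card S = r}"

definition nsl_loss :: "nat \<Rightarrow> real mat \<Rightarrow> real mat \<Rightarrow> real mat \<Rightarrow> real" where
  "nsl_loss k M U V = (1 / real k) * (\<Sum>r=1..k. (frob_norm (U * sel_mat k {0..<r} * transpose_mat V - M))\<^sup>2)"

definition M_NSL :: "nat \<Rightarrow> nat \<Rightarrow> nat \<Rightarrow> real mat \<Rightarrow> (real mat \<times> real mat) set" where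
  "M_NSL m n k M = {(U,V). U \<in> carrier_mat m k \<and> V \<in> carrier_mat n k \<and>
      (\<forall>U' \<in> carrier_mat m k. \<forall>V' \<in> carrier_mat n k. nsl_loss k M U V \<le> nsl_loss k M U' V')}"

end

theory Submission
  imports Defs
begin

(* Each summand |U Pi_[r] V^T - M|_F^2 of the nested loss is at least the Eckart-Young bound
   sigma_{r+1}^2 + ... + sigma_k^2, because U Pi_[r] V^T has rank at most r, and the pair
   (P Sigma, Q) attains all k bounds simultaneously. Hence a minimiser attains every bound, and
   the equality case of Eckart-Young, which holds because sigma_r > sigma_{r+1}, forces
   U Pi_[r] V^T = A_r.
   Eckart-Young is proved directly: write the rank-r matrix as E Z with E having orthonormal
   columns; then |M - E Z|^2 = sum_i sigma_i^2 (1 - w_i) + |E^T M - Z|^2 with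
   w_i = |E^T p_i|^2, where 0 <= w_i <= 1 and sum_i w_i <= r by Bessel's inequality, and such
   a weighted sum is minimised exactly by the weights putting mass 1 on the r largest sigma_i. *)

(* Matrices are coordinate functions nat => nat => real with explicit dimensions; the
   Jordan_Normal_Form matrices of the statement are translated only at the end. *)

definition orthonormal :: "nat \<Rightarrow> nat \<Rightarrow> (nat \<Rightarrow> nat \<Rightarrow> real) \<Rightarrow> bool" where
  "orthonormal m s E \<longleftrightarrow> (\<forall>j<s. \<forall>j'<s. (\<Sum>a<m. E a j * E a j') = (if j = j' then 1 else 0))"

definition sum_sq :: "nat \<Rightarrow> nat \<Rightarrow> (nat \<Rightarrow> nat \<Rightarrow> real) \<Rightarrow> real" where
  "sum_sq m n X = (\<Sum>a<m. \<Sum>b<n. (X a b)\<^sup>2)"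

definition proj_norm_sq :: "nat \<Rightarrow> nat \<Rightarrow> (nat \<Rightarrow> nat \<Rightarrow> real) \<Rightarrow> (nat \<Rightarrow> real) \<Rightarrow> real" where
  "proj_norm_sq m s E x = (\<Sum>j<s. (\<Sum>a<m. E a j * x a)\<^sup>2)"

lemma sum_lessThan_split:
  fixes f :: "nat \<Rightarrow> 'a::comm_monoid_add"
  shows "r \<le> k \<Longrightarrow> (\<Sum>i<k. f i) = (\<Sum>i<r. f i) + (\<Sum>i=r..<k. f i)"
  by (simp add: lessThan_atLeast0 sum.atLeastLessThan_concat)

lemma sum_sq_nonneg: "0 \<le> sum_sq m n X"
  unfolding sum_sq_def by (intro sum_nonneg) simp

lemma sum_sq_cong:
  "(\<And>a b. a < m \<Longrightarrow> b < n \<Longrightarrow> X a b = Y a b) \<Longrightarrow> sum_sq m n X = sum_sq m n Y"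
  unfolding sum_sq_def by (intro sum.cong refl) auto

lemma sum_sq_eq_0_iff: "sum_sq m n X = 0 \<longleftrightarrow> (\<forall>a<m. \<forall>b<n. X a b = 0)"
  unfolding sum_sq_def by (auto simp: sum_nonneg_eq_0_iff sum_nonneg)

lemma sum_sq_transpose: "sum_sq m n X = sum_sq n m (\<lambda>b a. X a b)"
  unfolding sum_sq_def by (rule sum.swap)

lemma sum_sq_diff_commute: "sum_sq m n (\<lambda>a b. X a b - Y a b) = sum_sq m n (\<lambda>a b. Y a b - X a b)"
  unfolding sum_sq_def by (simp add: power2_commute)

lemma orthonormal_inner:
  "orthonormal m s E \<Longrightarrow> j < s \<Longrightarrow> j' < s \<Longrightarrow> (\<Sum>a<m. E a j * E a j') = (if j = j' then 1 else 0)"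
  unfolding orthonormal_def by blast

lemma orthonormal_col_norm: "orthonormal m s E \<Longrightarrow> j < s \<Longrightarrow> (\<Sum>a<m. (E a j)\<^sup>2) = 1"
  unfolding orthonormal_def by (simp add: power2_eq_square)

lemma orthonormal_combination_sq:
  assumes "orthonormal m s E"
  shows "(\<Sum>a<m. (\<Sum>j<s. E a j * w j)\<^sup>2) = (\<Sum>j<s. (w j)\<^sup>2)"
proof -
  have "(\<Sum>a<m. (\<Sum>j<s. E a j * w j)\<^sup>2) = (\<Sum>a<m. \<Sum>j<s. \<Sum>j'<s. w j * w j' * (E a j * E a j'))"
    by (simp add: power2_eq_square sum_product algebra_simps)
  also have "\<dots> = (\<Sum>j<s. \<Sum>j'<s. w j * w j' * (\<Sum>a<m. E a j * E a j'))"
    by (simp add: sum_distrib_left sum.swap[of _ "{..<m}"])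
  also have "\<dots> = (\<Sum>j<s. \<Sum>j'<s. if j = j' then w j * w j' else 0)"
    using assms by (intro sum.cong refl) (simp add: orthonormal_inner)
  also have "\<dots> = (\<Sum>j<s. (w j)\<^sup>2)"
    by (simp add: power2_eq_square)
  finally show ?thesis .
qed

lemma orthonormal_residual_orthogonal:
  assumes "orthonormal m s E" "j < s"
  shows "(\<Sum>a<m. E a j * (x a - (\<Sum>j'<s. E a j' * (\<Sum>b<m. E b j' * x b)))) = 0"
proof -
  have "(\<Sum>a<m. E a j * (x a - (\<Sum>j'<s. E a j' * (\<Sum>b<m. E b j' * x b)))) =
      (\<Sum>a<m. E a j * x a) - (\<Sum>j'<s. (\<Sum>a<m. E a j * E a j') * (\<Sum>b<m. E b j' * x b))"
    by (simp add: sum_subtractf sum_distrib_left sum_distrib_right algebra_simps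
        sum.swap[of _ "{..<s}"])
  also have "\<dots> = (\<Sum>a<m. E a j * x a) - (\<Sum>j'<s. if j = j' then (\<Sum>b<m. E b j' * x b) else 0)"
    using assms by (intro arg_cong2[where f = "(-)"] sum.cong refl) (simp add: orthonormal_inner)
  also have "\<dots> = 0"
    using assms(2) by (simp add: mult.commute)
  finally show ?thesis .
qed

lemma orthonormal_pythagoras:
  assumes "orthonormal m s E" and "\<And>j. j < s \<Longrightarrow> (\<Sum>a<m. E a j * y a) = 0"
  shows "(\<Sum>a<m. (y a + (\<Sum>j<s. E a j * w j))\<^sup>2) = (\<Sum>a<m. (y a)\<^sup>2) + (\<Sum>j<s. (w j)\<^sup>2)"
proof -
  have "(\<Sum>a<m. y a * (\<Sum>j<s. E a j * w j)) = (\<Sum>j<s. w j * (\<Sum>a<m. E a j * y a))"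
    by (simp add: sum_distrib_left algebra_simps sum.swap[of _ "{..<s}"])
  also have "\<dots> = 0" using assms(2) by simp
  finally have "(\<Sum>a<m. y a * (\<Sum>j<s. E a j * w j)) = 0" .
  then show ?thesis
    using orthonormal_combination_sq[OF assms(1)]
    by (simp add: power2_sum sum.distrib sum_distrib_left[symmetric] mult.assoc)
qed

lemma bessel_identity:
  assumes "orthonormal m s E"
  shows "(\<Sum>a<m. (x a)\<^sup>2) =
    (\<Sum>a<m. (x a - (\<Sum>j<s. E a j * (\<Sum>b<m. E b j * x b)))\<^sup>2) + proj_norm_sq m s E x"
proof -
  define c where "c j = (\<Sum>b<m. E b j * x b)" for j
  have "(\<Sum>a<m. (x a)\<^sup>2) = (\<Sum>a<m. ((x a - (\<Sum>j<s. E a j * c j)) + (\<Sum>j<s. E a j * c j))\<^sup>2)"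
    by simp
  also have "\<dots> = (\<Sum>a<m. (x a - (\<Sum>j<s. E a j * c j))\<^sup>2) + (\<Sum>j<s. (c j)\<^sup>2)"
    using orthonormal_residual_orthogonal[OF assms]
    by (intro orthonormal_pythagoras[OF assms]) (simp add: c_def)
  finally show ?thesis
    by (simp add: c_def proj_norm_sq_def)
qed

lemma bessel_inequality: "orthonormal m s E \<Longrightarrow> proj_norm_sq m s E x \<le> (\<Sum>a<m. (x a)\<^sup>2)"
  using bessel_identity[of m s E x] by (simp add: sum_nonneg)

lemma bessel_eq_imp_in_span:
  assumes "orthonormal m s E" "proj_norm_sq m s E x = (\<Sum>a<m. (x a)\<^sup>2)" "a < m"
  shows "(\<Sum>j<s. E a j * (\<Sum>b<m. E b j * x b)) = x a"
  using bessel_identity[OF assms(1), of x] assms(2,3) by (simp add: sum_nonneg_eq_0_iff)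

lemma proj_norm_sq_eq_0_imp: "proj_norm_sq m s E x = 0 \<Longrightarrow> (\<Sum>j<s. E a j * (\<Sum>b<m. E b j * x b)) = 0"
  unfolding proj_norm_sq_def by (simp add: sum_nonneg_eq_0_iff)

lemma orthonormal_snoc:
  assumes E: "orthonormal m s E" and e: "(\<Sum>a<m. (e a)\<^sup>2) = 1"
    and perp: "\<And>j. j < s \<Longrightarrow> (\<Sum>a<m. E a j * e a) = 0"
  shows "orthonormal m (Suc s) (\<lambda>a j. if j = s then e a else E a j)"
  unfolding orthonormal_def
proof (intro allI impI)
  fix j j' assume "j < Suc s" "j' < Suc s"
  then show "(\<Sum>a<m. (if j = s then e a else E a j) * (if j' = s then e a else E a j')) =
      (if j = j' then 1 else 0)"
    using orthonormal_inner[OF E] e perp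
    by (cases "j = s"; cases "j' = s") (auto simp: power2_eq_square mult.commute)
qed

lemma orthonormal_snoc_residual:
  fixes x :: "nat \<Rightarrow> real"
  assumes E: "orthonormal m s E" and "a0 < m"
    and "x a0 \<noteq> (\<Sum>j<s. E a0 j * (\<Sum>b<m. E b j * x b))"
  obtains e t where "orthonormal m (Suc s) (\<lambda>a j. if j = s then e a else E a j)"
    "\<And>a. x a = (\<Sum>j<s. E a j * (\<Sum>b<m. E b j * x b)) + e a * t"
proof -
  define y where "y a = x a - (\<Sum>j<s. E a j * (\<Sum>b<m. E b j * x b))" for a
  define t where "t = sqrt (\<Sum>a<m. (y a)\<^sup>2)"
  have "(y a0)\<^sup>2 \<le> (\<Sum>a<m. (y a)\<^sup>2)"
    using \<open>a0 < m\<close> by (intro member_le_sum) auto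
  moreover have "y a0 \<noteq> 0"
    using assms(3) by (simp add: y_def)
  ultimately have y_pos: "0 < (\<Sum>a<m. (y a)\<^sup>2)"
    by (smt (verit) zero_less_power2)
  then have "0 < t" and t2: "t\<^sup>2 = (\<Sum>a<m. (y a)\<^sup>2)"
    by (simp_all add: t_def)
  define e where "e a = y a / t" for a
  have "(\<Sum>a<m. (e a)\<^sup>2) = 1"
    using y_pos t2 by (simp add: e_def power_divide flip: sum_divide_distrib)
  moreover have "(\<Sum>a<m. E a j * e a) = 0" if "j < s" for j
    using orthonormal_residual_orthogonal[OF E that, of x]
    by (simp add: e_def y_def flip: sum_divide_distrib)
  ultimately have "orthonormal m (Suc s) (\<lambda>a j. if j = s then e a else E a j)"
    by (rule orthonormal_snoc[OF E])
  moreover have "x a = (\<Sum>j<s. E a j * (\<Sum>b<m. E b j * x b)) + e a * t" for a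
    using \<open>0 < t\<close> by (simp add: e_def y_def)
  ultimately show ?thesis
    by (rule that)
qed

(* Gram-Schmidt; s < r when the columns of A are linearly dependent. *)
lemma orthonormal_span_columns:
  fixes A :: "nat \<Rightarrow> nat \<Rightarrow> real"
  shows "\<exists>s\<le>r. \<exists>E. orthonormal m s E \<and> (\<forall>l<r. \<exists>c. \<forall>a<m. A a l = (\<Sum>j<s. E a j * c j))"
proof (induction r)
  case 0
  have "orthonormal m 0 E" for E
    by (simp add: orthonormal_def)
  then show ?case
    by blast
next
  case (Suc r)
  then obtain s E where "s \<le> r" and E: "orthonormal m s E"
    and span: "\<forall>l<r. \<exists>c. \<forall>a<m. A a l = (\<Sum>j<s. E a j * c j)"
    by blast
  define c where "c j = (\<Sum>b<m. E b j * A b r)" for j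
  show ?case
  proof (cases "\<forall>a<m. A a r = (\<Sum>j<s. E a j * c j)")
    case True
    with span have "\<forall>l<Suc r. \<exists>c. \<forall>a<m. A a l = (\<Sum>j<s. E a j * c j)"
      by (metis less_Suc_eq)
    with \<open>s \<le> r\<close> E show ?thesis
      by (metis le_Suc_eq)
  next
    case False
    then obtain a0 where "a0 < m" "A a0 r \<noteq> (\<Sum>j<s. E a0 j * c j)"
      by blast
    then obtain e t where E': "orthonormal m (Suc s) (\<lambda>a j. if j = s then e a else E a j)"
      and new: "\<And>a. A a r = (\<Sum>j<s. E a j * c j) + e a * t"
      using orthonormal_snoc_residual[OF E, of a0 "\<lambda>a. A a r"] unfolding c_def by blast
    have "\<exists>c'. \<forall>a<m. A a l = (\<Sum>j<Suc s. (if j = s then e a else E a j) * c' j)"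
      if "l < Suc r" for l
    proof (cases "l = r")
      case True
      then show ?thesis
        using new by (intro exI[of _ "\<lambda>j. if j = s then t else c j"]) simp
    next
      case False
      with span that obtain c' where "\<forall>a<m. A a l = (\<Sum>j<s. E a j * c' j)"
        by (auto simp: less_Suc_eq)
      then show ?thesis
        by (intro exI[of _ "\<lambda>j. if j = s then 0 else c' j"]) simp
    qed
    with \<open>s \<le> r\<close> E' show ?thesis
      by (intro exI[of _ "Suc s"]) blast
  qed
qed

lemma low_rank_factor_orthonormal:
  fixes A B :: "nat \<Rightarrow> nat \<Rightarrow> real"
  obtains s E Z where "s \<le> r" "orthonormal m s E"
    "\<And>a b. a < m \<Longrightarrow> (\<Sum>l<r. A a l * B b l) = (\<Sum>j<s. E a j * Z j b)"
proof -
  obtain s E where "s \<le> r" "orthonormal m s E"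
    and "\<forall>l<r. \<exists>c. \<forall>a<m. A a l = (\<Sum>j<s. E a j * c j)"
    using orthonormal_span_columns by blast
  then obtain C where C: "\<And>l a. l < r \<Longrightarrow> a < m \<Longrightarrow> A a l = (\<Sum>j<s. E a j * C l j)"
    by metis
  have "(\<Sum>l<r. A a l * B b l) = (\<Sum>j<s. E a j * (\<Sum>l<r. C l j * B b l))" if "a < m" for a b
    using that
    by (simp add: C sum_distrib_left sum_distrib_right mult.assoc sum.swap[of _ "{..<r}"])
  then show ?thesis
    by (rule that[OF \<open>s \<le> r\<close> \<open>orthonormal m s E\<close>])
qed

lemma sum_sq_pythagoras:
  assumes E: "orthonormal m s E"
    and perp: "\<And>j b. j < s \<Longrightarrow> b < n \<Longrightarrow> (\<Sum>a<m. E a j * R a b) = 0"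
  shows "sum_sq m n (\<lambda>a b. R a b + (\<Sum>j<s. E a j * W j b)) = sum_sq m n R + sum_sq s n W"
proof -
  have "sum_sq m n (\<lambda>a b. R a b + (\<Sum>j<s. E a j * W j b)) =
      sum_sq n m (\<lambda>b a. R a b + (\<Sum>j<s. E a j * W j b))"
    by (rule sum_sq_transpose)
  also have "\<dots> = (\<Sum>b<n. (\<Sum>a<m. (R a b)\<^sup>2) + (\<Sum>j<s. (W j b)\<^sup>2))"
    unfolding sum_sq_def using perp by (intro sum.cong refl orthonormal_pythagoras[OF E]) auto
  also have "\<dots> = sum_sq n m (\<lambda>b a. R a b) + sum_sq n s (\<lambda>b j. W j b)"
    by (simp add: sum_sq_def sum.distrib)
  finally show ?thesis
    using sum_sq_transpose[of m n R] sum_sq_transpose[of s n W] by simp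
qed

lemma sum_sq_dist_to_range:
  fixes M Z :: "nat \<Rightarrow> nat \<Rightarrow> real"
  assumes E: "orthonormal m s E"
  defines "N \<equiv> \<lambda>j b. \<Sum>a<m. E a j * M a b"
  shows "sum_sq m n (\<lambda>a b. M a b - (\<Sum>j<s. E a j * Z j b)) =
    sum_sq m n M - sum_sq s n N + sum_sq s n (\<lambda>j b. N j b - Z j b)"
proof -
  define R where "R a b = M a b - (\<Sum>j<s. E a j * N j b)" for a b
  have perp: "(\<Sum>a<m. E a j * R a b) = 0" if "j < s" for j b
    unfolding R_def N_def by (rule orthonormal_residual_orthogonal[OF E that])
  have "sum_sq m n M = sum_sq m n (\<lambda>a b. R a b + (\<Sum>j<s. E a j * N j b))"
    by (rule sum_sq_cong) (simp add: R_def)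
  also have "\<dots> = sum_sq m n R + sum_sq s n N"
    by (rule sum_sq_pythagoras[OF E perp])
  finally have M: "sum_sq m n M = sum_sq m n R + sum_sq s n N" .
  have "sum_sq m n (\<lambda>a b. M a b - (\<Sum>j<s. E a j * Z j b)) =
      sum_sq m n (\<lambda>a b. R a b + (\<Sum>j<s. E a j * (N j b - Z j b)))"
    by (rule sum_sq_cong) (simp add: R_def right_diff_distrib sum_subtractf)
  also have "\<dots> = sum_sq m n R + sum_sq s n (\<lambda>j b. N j b - Z j b)"
    by (rule sum_sq_pythagoras[OF E perp])
  finally show ?thesis
    using M by simp
qed

lemma sum_sq_mult_orthonormal_right:
  assumes "orthonormal n k q"
  shows "sum_sq s n (\<lambda>j b. \<Sum>i<k. Y j i * q b i) = sum_sq s k Y"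
  unfolding sum_sq_def using orthonormal_combination_sq[OF assms] by (simp add: mult.commute)

lemma sum_sq_svd:
  assumes p: "orthonormal m k p" and q: "orthonormal n k q"
  shows "sum_sq m n (\<lambda>a b. \<Sum>i<k. \<tau> i * p a i * q b i) = (\<Sum>i<k. (\<tau> i)\<^sup>2)"
proof -
  have "sum_sq m n (\<lambda>a b. \<Sum>i<k. \<tau> i * p a i * q b i) = sum_sq k m (\<lambda>i a. \<tau> i * p a i)"
    using sum_sq_mult_orthonormal_right[OF q, of m "\<lambda>a i. \<tau> i * p a i"]
    by (simp add: sum_sq_transpose[of m k])
  also have "\<dots> = (\<Sum>i<k. (\<tau> i)\<^sup>2 * (\<Sum>a<m. (p a i)\<^sup>2))"
    by (simp add: sum_sq_def power_mult_distrib sum_distrib_left)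
  also have "\<dots> = (\<Sum>i<k. (\<tau> i)\<^sup>2)"
    using orthonormal_col_norm[OF p] by simp
  finally show ?thesis .
qed

lemma sum_sq_project_svd:
  assumes q: "orthonormal n k q"
  shows "sum_sq s n (\<lambda>j b. \<Sum>a<m. E a j * (\<Sum>i<k. \<sigma> i * p a i * q b i)) =
    (\<Sum>i<k. (\<sigma> i)\<^sup>2 * proj_norm_sq m s E (\<lambda>a. p a i))"
proof -
  define c where "c j i = (\<Sum>a<m. E a j * p a i)" for j i
  have "sum_sq s n (\<lambda>j b. \<Sum>a<m. E a j * (\<Sum>i<k. \<sigma> i * p a i * q b i)) =
      sum_sq s n (\<lambda>j b. \<Sum>i<k. (\<sigma> i * c j i) * q b i)"
    unfolding c_def
    by (simp add: sum_distrib_left sum_distrib_right sum.swap[of _ "{..<k}"] algebra_simps)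
  also have "\<dots> = sum_sq s k (\<lambda>j i. \<sigma> i * c j i)"
    by (rule sum_sq_mult_orthonormal_right[OF q])
  also have "\<dots> = (\<Sum>i<k. (\<sigma> i)\<^sup>2 * proj_norm_sq m s E (\<lambda>a. p a i))"
    unfolding sum_sq_def proj_norm_sq_def c_def[symmetric]
    by (simp add: power_mult_distrib sum_distrib_left sum.swap[of _ "{..<k}"])
  finally show ?thesis .
qed

lemma sum_proj_norm_sq_le:
  assumes E: "orthonormal m s E" and p: "orthonormal m k p"
  shows "(\<Sum>i<k. proj_norm_sq m s E (\<lambda>a. p a i)) \<le> s"
proof -
  have "(\<Sum>i<k. proj_norm_sq m s E (\<lambda>a. p a i)) = (\<Sum>j<s. proj_norm_sq m k p (\<lambda>a. E a j))"
    unfolding proj_norm_sq_def by (subst sum.swap) (simp add: mult.commute)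
  also have "\<dots> \<le> (\<Sum>j<s. \<Sum>a<m. (E a j)\<^sup>2)"
    by (intro sum_mono bessel_inequality[OF p])
  also have "\<dots> = s"
    using orthonormal_col_norm[OF E] by simp
  finally show ?thesis .
qed

lemma weighted_sum_le_top_sum:
  fixes f w :: "nat \<Rightarrow> real"
  assumes "r \<le> k" "0 < c"
    and top: "\<And>i. i < r \<Longrightarrow> c \<le> f i" and low: "\<And>i. r \<le> i \<Longrightarrow> i < k \<Longrightarrow> f i < c"
    and w0: "\<And>i. i < k \<Longrightarrow> 0 \<le> w i" and w1: "\<And>i. i < k \<Longrightarrow> w i \<le> 1"
    and w_sum: "(\<Sum>i<k. w i) \<le> r"
  shows "(\<Sum>i<k. f i * w i) \<le> (\<Sum>i<r. f i)"
    and "(\<Sum>i<k. f i * w i) = (\<Sum>i<r. f i) \<Longrightarrow> i < k \<Longrightarrow> w i = (if i < r then 1 else 0)"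
proof -
  define D1 where "D1 = (\<Sum>i<r. (f i - c) * (1 - w i))"
  define D2 where "D2 = (\<Sum>i=r..<k. (c - f i) * w i)"
  have split: "(\<Sum>i<k. g i) = (\<Sum>i<r. g i) + (\<Sum>i=r..<k. g i)" for g :: "nat \<Rightarrow> real"
    using \<open>r \<le> k\<close> by (rule sum_lessThan_split)
  have slack: "(\<Sum>i<r. f i) - (\<Sum>i<k. f i * w i) = D1 + D2 + c * (r - (\<Sum>i<k. w i))"
    unfolding D1_def D2_def split[of "\<lambda>i. f i * w i"] split[of w]
    by (simp add: algebra_simps sum.distrib sum_subtractf sum_distrib_left)
  have D2_terms: "0 \<le> (c - f i) * w i" if "i \<in> {r..<k}" for i
    using low[of i] w0[of i] that by simp
  have "0 \<le> D1"
    unfolding D1_def using top w1 \<open>r \<le> k\<close> by (intro sum_nonneg) simp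
  moreover have "0 \<le> D2"
    unfolding D2_def using D2_terms by (rule sum_nonneg)
  moreover have "0 \<le> c * (r - (\<Sum>i<k. w i))"
    using \<open>0 < c\<close> w_sum by simp
  ultimately show "(\<Sum>i<k. f i * w i) \<le> (\<Sum>i<r. f i)"
    using slack by linarith
  assume "(\<Sum>i<k. f i * w i) = (\<Sum>i<r. f i)" "i < k"
  with slack \<open>0 \<le> D1\<close> \<open>0 \<le> D2\<close> \<open>0 \<le> c * (r - (\<Sum>i<k. w i))\<close>
  have "D2 = 0" and "c * (r - (\<Sum>i<k. w i)) = 0"
    by linarith+
  from this(2) have "(\<Sum>i<k. w i) = r"
    using \<open>0 < c\<close> by simp
  have w_low: "w i = 0" if "i \<in> {r..<k}" for i
  proof -
    have "(c - f i) * w i = 0"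
      using \<open>D2 = 0\<close> D2_terms that unfolding D2_def by (subst (asm) sum_nonneg_eq_0_iff) auto
    then show ?thesis
      using low[of i] that by simp
  qed
  then have "(\<Sum>i<r. 1 - w i) = 0"
    using \<open>(\<Sum>i<k. w i) = r\<close> split[of w] by (simp add: sum_subtractf)
  then have "w i = 1" if "i < r" for i
    using w1 \<open>r \<le> k\<close> that by (subst (asm) sum_nonneg_eq_0_iff) auto
  with w_low show "w i = (if i < r then 1 else 0)"
    using \<open>i < k\<close> by simp
qed

(* D is |E^T M - Z|^2; when it vanishes, the low-rank matrix is the projection of M onto span E. *)
lemma low_rank_dist_to_svd:
  fixes p q A B :: "nat \<Rightarrow> nat \<Rightarrow> real" and \<sigma> :: "nat \<Rightarrow> real"
  assumes p: "orthonormal m k p" and q: "orthonormal n k q"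
  obtains s E D where "s \<le> r" "orthonormal m s E" "0 \<le> D"
    "sum_sq m n (\<lambda>a b. (\<Sum>i<k. \<sigma> i * p a i * q b i) - (\<Sum>l<r. A a l * B b l)) =
      (\<Sum>i<k. (\<sigma> i)\<^sup>2) - (\<Sum>i<k. (\<sigma> i)\<^sup>2 * proj_norm_sq m s E (\<lambda>a. p a i)) + D"
    "\<And>a b. D = 0 \<Longrightarrow> a < m \<Longrightarrow> b < n \<Longrightarrow>
      (\<Sum>l<r. A a l * B b l) = (\<Sum>j<s. E a j * (\<Sum>a'<m. E a' j * (\<Sum>i<k. \<sigma> i * p a' i * q b i)))"
proof -
  obtain s E Z where "s \<le> r" and E: "orthonormal m s E"
    and factor: "\<And>a b. a < m \<Longrightarrow> (\<Sum>l<r. A a l * B b l) = (\<Sum>j<s. E a j * Z j b)"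
    using low_rank_factor_orthonormal[where r = r and m = m and A = A and B = B] by blast
  define N where "N j b = (\<Sum>a<m. E a j * (\<Sum>i<k. \<sigma> i * p a i * q b i))" for j b
  define D where "D = sum_sq s n (\<lambda>j b. N j b - Z j b)"
  have "sum_sq m n (\<lambda>a b. (\<Sum>i<k. \<sigma> i * p a i * q b i) - (\<Sum>l<r. A a l * B b l)) =
      sum_sq m n (\<lambda>a b. (\<Sum>i<k. \<sigma> i * p a i * q b i) - (\<Sum>j<s. E a j * Z j b))"
    using factor by (intro sum_sq_cong) simp
  also have "\<dots> = (\<Sum>i<k. (\<sigma> i)\<^sup>2) - (\<Sum>i<k. (\<sigma> i)\<^sup>2 * proj_norm_sq m s E (\<lambda>a. p a i)) + D"
    unfolding sum_sq_dist_to_range[OF E] sum_sq_svd[OF p q] sum_sq_project_svd[OF q] D_def N_def ..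
  finally have dist: "sum_sq m n (\<lambda>a b. (\<Sum>i<k. \<sigma> i * p a i * q b i) - (\<Sum>l<r. A a l * B b l)) =
      (\<Sum>i<k. (\<sigma> i)\<^sup>2) - (\<Sum>i<k. (\<sigma> i)\<^sup>2 * proj_norm_sq m s E (\<lambda>a. p a i)) + D" .
  have "(\<Sum>l<r. A a l * B b l) = (\<Sum>j<s. E a j * N j b)" if "D = 0" "a < m" "b < n" for a b
    using that factor[of a b] by (simp add: D_def sum_sq_eq_0_iff)
  then show ?thesis
    using that[OF \<open>s \<le> r\<close> E _ dist] sum_sq_nonneg by (simp add: D_def N_def)
qed

locale singular_values =
  fixes k :: nat and \<sigma> :: "nat \<Rightarrow> real"
  assumes decreasing: "\<And>i j. i < j \<Longrightarrow> j < k \<Longrightarrow> \<sigma> j < \<sigma> i"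
    and pos: "\<And>i. i < k \<Longrightarrow> 0 < \<sigma> i"
begin

lemma proj_weighted_sum_le:
  assumes E: "orthonormal m s E" and p: "orthonormal m k p" and "s \<le> r"
    and r: "1 \<le> r" "r \<le> k"
  shows "(\<Sum>i<k. (\<sigma> i)\<^sup>2 * proj_norm_sq m s E (\<lambda>a. p a i)) \<le> (\<Sum>i<r. (\<sigma> i)\<^sup>2)"
    and "(\<Sum>i<k. (\<sigma> i)\<^sup>2 * proj_norm_sq m s E (\<lambda>a. p a i)) = (\<Sum>i<r. (\<sigma> i)\<^sup>2) \<Longrightarrow> i < k \<Longrightarrow>
      proj_norm_sq m s E (\<lambda>a. p a i) = (if i < r then 1 else 0)"
proof -
  have "r - 1 < k"
    using r by simp
  then have "0 < \<sigma> (r - 1)"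
    by (rule pos)
  have "\<sigma> (r - 1) \<le> \<sigma> i" if "i < r" for i
    using \<open>r - 1 < k\<close> that by (cases "i = r - 1") (auto intro!: less_imp_le decreasing)
  then have top: "(\<sigma> (r - 1))\<^sup>2 \<le> (\<sigma> i)\<^sup>2" if "i < r" for i
    using \<open>0 < \<sigma> (r - 1)\<close> that by (simp add: power_mono)
  have low: "(\<sigma> i)\<^sup>2 < (\<sigma> (r - 1))\<^sup>2" if "r \<le> i" "i < k" for i
    using decreasing[of "r - 1" i] pos[of i] r that by (simp add: power_strict_mono)
  have "0 < (\<sigma> (r - 1))\<^sup>2"
    using \<open>0 < \<sigma> (r - 1)\<close> by simp
  have w0: "0 \<le> proj_norm_sq m s E (\<lambda>a. p a i)" for i
    unfolding proj_norm_sq_def by (simp add: sum_nonneg)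
  have w1: "proj_norm_sq m s E (\<lambda>a. p a i) \<le> 1" if "i < k" for i
    using bessel_inequality[OF E] orthonormal_col_norm[OF p that] by metis
  have w_sum: "(\<Sum>i<k. proj_norm_sq m s E (\<lambda>a. p a i)) \<le> r"
    using sum_proj_norm_sq_le[OF E p] \<open>s \<le> r\<close> by simp
  note weighted = weighted_sum_le_top_sum[where f = "\<lambda>i. (\<sigma> i)\<^sup>2" and c = "(\<sigma> (r - 1))\<^sup>2"
      and w = "\<lambda>i. proj_norm_sq m s E (\<lambda>a. p a i)",
      OF \<open>r \<le> k\<close> \<open>0 < (\<sigma> (r - 1))\<^sup>2\<close> top low w0 w1 w_sum]
  show "(\<Sum>i<k. (\<sigma> i)\<^sup>2 * proj_norm_sq m s E (\<lambda>a. p a i)) \<le> (\<Sum>i<r. (\<sigma> i)\<^sup>2)"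
    by (rule weighted(1))
  show "(\<Sum>i<k. (\<sigma> i)\<^sup>2 * proj_norm_sq m s E (\<lambda>a. p a i)) = (\<Sum>i<r. (\<sigma> i)\<^sup>2) \<Longrightarrow> i < k \<Longrightarrow>
      proj_norm_sq m s E (\<lambda>a. p a i) = (if i < r then 1 else 0)"
    by (rule weighted(2))
qed

lemma eckart_young:
  fixes p q A B :: "nat \<Rightarrow> nat \<Rightarrow> real"
  assumes p: "orthonormal m k p" and q: "orthonormal n k q" and r: "1 \<le> r" "r \<le> k"
  shows "(\<Sum>i=r..<k. (\<sigma> i)\<^sup>2) \<le>
    sum_sq m n (\<lambda>a b. (\<Sum>i<k. \<sigma> i * p a i * q b i) - (\<Sum>l<r. A a l * B b l))"
proof (rule low_rank_dist_to_svd[OF p q, where r = r and A = A and B = B and \<sigma> = \<sigma>])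
  fix s E D
  assume "s \<le> r" "orthonormal m s E" "0 \<le> D"
    and "sum_sq m n (\<lambda>a b. (\<Sum>i<k. \<sigma> i * p a i * q b i) - (\<Sum>l<r. A a l * B b l)) =
      (\<Sum>i<k. (\<sigma> i)\<^sup>2) - (\<Sum>i<k. (\<sigma> i)\<^sup>2 * proj_norm_sq m s E (\<lambda>a. p a i)) + D"
  with proj_weighted_sum_le(1)[OF \<open>orthonormal m s E\<close> p \<open>s \<le> r\<close> r]
    sum_lessThan_split[OF r(2), of "\<lambda>i. (\<sigma> i)\<^sup>2"]
  show ?thesis by linarith
qed

lemma eckart_young_eq:
  fixes p q A B :: "nat \<Rightarrow> nat \<Rightarrow> real"
  assumes p: "orthonormal m k p" and q: "orthonormal n k q" and r: "1 \<le> r" "r \<le> k"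
    and eq: "sum_sq m n (\<lambda>a b. (\<Sum>i<k. \<sigma> i * p a i * q b i) - (\<Sum>l<r. A a l * B b l)) =
      (\<Sum>i=r..<k. (\<sigma> i)\<^sup>2)"
    and "a < m" "b < n"
  shows "(\<Sum>l<r. A a l * B b l) = (\<Sum>i<r. \<sigma> i * p a i * q b i)"
proof (rule low_rank_dist_to_svd[OF p q, where r = r and A = A and B = B and \<sigma> = \<sigma>])
  fix s E D
  assume "s \<le> r" and E: "orthonormal m s E" and "0 \<le> D"
    and dist: "sum_sq m n (\<lambda>a b. (\<Sum>i<k. \<sigma> i * p a i * q b i) - (\<Sum>l<r. A a l * B b l)) =
      (\<Sum>i<k. (\<sigma> i)\<^sup>2) - (\<Sum>i<k. (\<sigma> i)\<^sup>2 * proj_norm_sq m s E (\<lambda>a. p a i)) + D"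
    and proj_range: "\<And>a b. D = 0 \<Longrightarrow> a < m \<Longrightarrow> b < n \<Longrightarrow> (\<Sum>l<r. A a l * B b l) =
      (\<Sum>j<s. E a j * (\<Sum>a'<m. E a' j * (\<Sum>i<k. \<sigma> i * p a' i * q b i)))"
  note weights = proj_weighted_sum_le[OF E p \<open>s \<le> r\<close> r]
  have "D = 0" and top: "(\<Sum>i<k. (\<sigma> i)\<^sup>2 * proj_norm_sq m s E (\<lambda>a. p a i)) = (\<Sum>i<r. (\<sigma> i)\<^sup>2)"
    using eq dist weights(1) \<open>0 \<le> D\<close> sum_lessThan_split[OF r(2), of "\<lambda>i. (\<sigma> i)\<^sup>2"]
    by linarith+
  have proj: "(\<Sum>j<s. E a j * (\<Sum>a'<m. E a' j * p a' i)) = (if i < r then p a i else 0)"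
    if "i < k" for i
  proof (cases "i < r")
    case True
    then show ?thesis
      using weights(2)[OF top that] orthonormal_col_norm[OF p that]
      by (simp add: bessel_eq_imp_in_span[OF E _ \<open>a < m\<close>])
  next
    case False
    then show ?thesis
      using weights(2)[OF top that] proj_norm_sq_eq_0_imp[of m s E "\<lambda>a. p a i" a] by simp
  qed
  have "(\<Sum>l<r. A a l * B b l) = (\<Sum>j<s. E a j * (\<Sum>a'<m. E a' j * (\<Sum>i<k. \<sigma> i * p a' i * q b i)))"
    using proj_range[OF \<open>D = 0\<close> \<open>a < m\<close> \<open>b < n\<close>] .
  also have "\<dots> = (\<Sum>i<k. \<sigma> i * (\<Sum>j<s. E a j * (\<Sum>a'<m. E a' j * p a' i)) * q b i)"
    by (simp add: sum_distrib_left sum_distrib_right sum.swap[of _ "{..<k}"] algebra_simps)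
  also have "\<dots> = (\<Sum>i<k. if i < r then \<sigma> i * p a i * q b i else 0)"
    by (intro sum.cong refl) (simp add: proj)
  also have "\<dots> = (\<Sum>i<r. \<sigma> i * p a i * q b i)"
    using sum_lessThan_split[OF r(2), of "\<lambda>i. if i < r then \<sigma> i * p a i * q b i else 0"] by simp
  finally show ?thesis .
qed

end

lemma index_mult_mat_sum:
  fixes A B :: "'a::comm_semiring_0 mat"
  assumes "A \<in> carrier_mat m p" "B \<in> carrier_mat p q" "a < m" "b < q"
  shows "(A * B) $$ (a, b) = (\<Sum>l<p. A $$ (a, l) * B $$ (l, b))"
  using assms by (simp add: scalar_prod_def lessThan_atLeast0)

lemma orthonormal_of_mat:
  fixes P :: "real mat"
  assumes "P \<in> carrier_mat m k" "transpose_mat P * P = 1\<^sub>m k"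
  shows "orthonormal m k (\<lambda>a i. P $$ (a, i))"
  unfolding orthonormal_def
proof (intro allI impI)
  fix j j' assume "j < k" "j' < k"
  then have "(transpose_mat P * P) $$ (j, j') = (\<Sum>a<m. transpose_mat P $$ (j, a) * P $$ (a, j'))"
    using assms(1) by (intro index_mult_mat_sum[of _ k m _ k]) auto
  also have "\<dots> = (\<Sum>a<m. P $$ (a, j) * P $$ (a, j'))"
    using assms(1) \<open>j < k\<close> by (intro sum.cong refl) auto
  finally show "(\<Sum>a<m. P $$ (a, j) * P $$ (a, j')) = (if j = j' then 1 else 0)"
    using assms(2) \<open>j < k\<close> \<open>j' < k\<close> by simp
qed

lemma frob_norm_sq:
  assumes "X \<in> carrier_mat m n"
  shows "(frob_norm X)\<^sup>2 = sum_sq m n (\<lambda>a b. X $$ (a, b))"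
  using assms sum_sq_nonneg[of m n "\<lambda>a b. X $$ (a, b)"] by (simp add: frob_norm_def sum_sq_def)

lemma index_mult_diag_mat:
  fixes U :: "'a::comm_semiring_1 mat"
  assumes "U \<in> carrier_mat m k" "a < m" "l < k"
  shows "(U * mat k k (\<lambda>(i, j). if i = j then d i else 0)) $$ (a, l) = d l * U $$ (a, l)"
proof -
  have "(U * mat k k (\<lambda>(i, j). if i = j then d i else 0)) $$ (a, l) =
      (\<Sum>l'<k. U $$ (a, l') * mat k k (\<lambda>(i, j). if i = j then d i else 0) $$ (l', l))"
    using assms by (intro index_mult_mat_sum) auto
  also have "\<dots> = (\<Sum>l'<k. if l' = l then d l * U $$ (a, l) else 0)"
    using assms by (intro sum.cong refl) (auto simp: mult.commute)
  finally show ?thesis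
    using assms by simp
qed

lemma index_mult_diag_mat_transpose:
  fixes U V :: "'a::comm_semiring_1 mat"
  assumes "U \<in> carrier_mat m k" "V \<in> carrier_mat n k" "a < m" "b < n"
  shows "(U * mat k k (\<lambda>(i, j). if i = j then d i else 0) * transpose_mat V) $$ (a, b) =
    (\<Sum>l<k. d l * U $$ (a, l) * V $$ (b, l))"
proof -
  have "U * mat k k (\<lambda>(i, j). if i = j then d i else 0) \<in> carrier_mat m k"
    using assms(1) by simp
  then have "(U * mat k k (\<lambda>(i, j). if i = j then d i else 0) * transpose_mat V) $$ (a, b) =
      (\<Sum>l<k. (U * mat k k (\<lambda>(i, j). if i = j then d i else 0)) $$ (a, l) *
        transpose_mat V $$ (l, b))"
    using assms by (intro index_mult_mat_sum) auto
  also have "\<dots> = (\<Sum>l<k. d l * U $$ (a, l) * V $$ (b, l))"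
    using assms by (intro sum.cong refl) (simp add: index_mult_diag_mat del: index_mult_mat)
  finally show ?thesis .
qed

lemma sel_mat_eq_diag:
  "sel_mat k S = mat k k (\<lambda>(i, j). if i = j then (if i \<in> S then 1 else 0) else 0)"
  unfolding sel_mat_def by (intro arg_cong[where f = "mat k k"]) auto

lemma index_nested_product:
  fixes U V :: "real mat"
  assumes "U \<in> carrier_mat m k" "V \<in> carrier_mat n k" "a < m" "b < n" "r \<le> k"
  shows "(U * sel_mat k {0..<r} * transpose_mat V) $$ (a, b) = (\<Sum>l<r. U $$ (a, l) * V $$ (b, l))"
  using index_mult_diag_mat_transpose[OF assms(1-4), of "\<lambda>i. if i \<in> {0..<r} then 1 else 0"]
    sum_lessThan_split[OF assms(5),
      of "\<lambda>l. (if l \<in> {0..<r} then 1 else 0) * U $$ (a, l) * V $$ (b, l)"]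
  by (simp add: sel_mat_eq_diag)

lemma frob_norm_nested_diff_sq:
  fixes U V B :: "real mat"
  assumes "U \<in> carrier_mat m k" "V \<in> carrier_mat n k" "B \<in> carrier_mat m n" "r \<le> k"
  shows "(frob_norm (U * sel_mat k {0..<r} * transpose_mat V - B))\<^sup>2 =
    sum_sq m n (\<lambda>a b. B $$ (a, b) - (\<Sum>l<r. U $$ (a, l) * V $$ (b, l)))"
proof -
  have C: "U * sel_mat k {0..<r} * transpose_mat V - B \<in> carrier_mat m n"
    by (rule minus_carrier_mat[OF assms(3)])
  have "(frob_norm (U * sel_mat k {0..<r} * transpose_mat V - B))\<^sup>2 =
      sum_sq m n (\<lambda>a b. (\<Sum>l<r. U $$ (a, l) * V $$ (b, l)) - B $$ (a, b))"
    unfolding frob_norm_sq[OF C] using assms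
    by (intro sum_sq_cong) (simp add: index_nested_product del: index_mult_mat)
  then show ?thesis
    by (simp add: sum_sq_diff_commute)
qed

locale svd_factors = singular_values k \<sigma> for k \<sigma> +
  fixes m n :: nat and P Q :: "real mat"
  assumes P_carrier: "P \<in> carrier_mat m k" and Q_carrier: "Q \<in> carrier_mat n k"
    and P_orthonormal: "transpose_mat P * P = 1\<^sub>m k"
    and Q_orthonormal: "transpose_mat Q * Q = 1\<^sub>m k"
begin

lemma P_cols_orthonormal: "orthonormal m k (\<lambda>a i. P $$ (a, i))"
  by (rule orthonormal_of_mat[OF P_carrier P_orthonormal])

lemma Q_cols_orthonormal: "orthonormal n k (\<lambda>b i. Q $$ (b, i))"
  by (rule orthonormal_of_mat[OF Q_carrier Q_orthonormal])

abbreviation svd_mat :: "real mat" where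
  "svd_mat \<equiv> P * diag_sv k \<sigma> * transpose_mat Q"

definition nested_err :: "real mat \<Rightarrow> real mat \<Rightarrow> nat \<Rightarrow> real" where
  "nested_err U V r = (frob_norm (U * sel_mat k {0..<r} * transpose_mat V - svd_mat))\<^sup>2"

lemma nested_err_eq_sum_sq:
  assumes "U \<in> carrier_mat m k" "V \<in> carrier_mat n k" "r \<le> k"
  shows "nested_err U V r = sum_sq m n (\<lambda>a b.
    (\<Sum>i<k. \<sigma> i * P $$ (a, i) * Q $$ (b, i)) - (\<Sum>l<r. U $$ (a, l) * V $$ (b, l)))"
proof -
  have M: "svd_mat \<in> carrier_mat m n"
    using P_carrier Q_carrier by (auto simp: diag_sv_def intro!: mult_carrier_mat)
  show ?thesis
    unfolding nested_err_def frob_norm_nested_diff_sq[OF assms(1,2) M assms(3)]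
    using P_carrier Q_carrier
    by (intro sum_sq_cong) (simp add: diag_sv_def index_mult_diag_mat_transpose del: index_mult_mat)
qed

lemma nested_err_lower_bound:
  assumes "U \<in> carrier_mat m k" "V \<in> carrier_mat n k" "r \<in> {1..k}"
  shows "(\<Sum>i=r..<k. (\<sigma> i)\<^sup>2) \<le> nested_err U V r"
  using assms eckart_young[OF P_cols_orthonormal Q_cols_orthonormal]
  by (simp add: nested_err_eq_sum_sq)

lemma nested_err_svd_factors:
  assumes "r \<le> k"
  shows "nested_err (P * diag_sv k \<sigma>) Q r = (\<Sum>i=r..<k. (\<sigma> i)\<^sup>2)"
proof -
  have U: "P * diag_sv k \<sigma> \<in> carrier_mat m k"
    using P_carrier by (simp add: diag_sv_def)
  have "nested_err (P * diag_sv k \<sigma>) Q r = sum_sq m n (\<lambda>a b.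
      (\<Sum>i<k. \<sigma> i * P $$ (a, i) * Q $$ (b, i)) - (\<Sum>i<r. \<sigma> i * P $$ (a, i) * Q $$ (b, i)))"
    unfolding nested_err_eq_sum_sq[OF U Q_carrier assms] using P_carrier assms
    by (intro sum_sq_cong arg_cong2[where f = "(-)"] sum.cong refl)
      (simp add: diag_sv_def index_mult_diag_mat del: index_mult_mat)
  also have "\<dots> = sum_sq m n (\<lambda>a b. \<Sum>i<k. (if i < r then 0 else \<sigma> i) * P $$ (a, i) * Q $$ (b, i))"
    by (intro sum_sq_cong) (simp add: sum_lessThan_split[OF assms])
  also have "\<dots> = (\<Sum>i<k. (if i < r then 0 else \<sigma> i)\<^sup>2)"
    by (rule sum_sq_svd[OF P_cols_orthonormal Q_cols_orthonormal])
  also have "\<dots> = (\<Sum>i=r..<k. (\<sigma> i)\<^sup>2)"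
    using sum_lessThan_split[OF assms, of "\<lambda>i. (if i < r then 0 else \<sigma> i)\<^sup>2"] by simp
  finally show ?thesis .
qed

lemma nsl_minimizer_nested_err:
  assumes "(U, V) \<in> M_NSL m n k svd_mat" "r \<in> {1..k}"
  shows "nested_err U V r = (\<Sum>i=r..<k. (\<sigma> i)\<^sup>2)"
proof (rule ccontr)
  have U: "U \<in> carrier_mat m k" and V: "V \<in> carrier_mat n k"
    and "nsl_loss k svd_mat U V \<le> nsl_loss k svd_mat (P * diag_sv k \<sigma>) Q"
    using assms(1) P_carrier Q_carrier by (auto simp: M_NSL_def diag_sv_def)
  then have "(\<Sum>r=1..k. nested_err U V r) \<le> (\<Sum>r=1..k. nested_err (P * diag_sv k \<sigma>) Q r)"
    using assms(2) by (simp add: nsl_loss_def nested_err_def divide_le_cancel)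
  also have "\<dots> = (\<Sum>r=1..k. \<Sum>i=r..<k. (\<sigma> i)\<^sup>2)"
    by (intro sum.cong refl) (simp add: nested_err_svd_factors)
  finally have le: "(\<Sum>r=1..k. nested_err U V r) \<le> (\<Sum>r=1..k. \<Sum>i=r..<k. (\<sigma> i)\<^sup>2)" .
  assume "nested_err U V r \<noteq> (\<Sum>i=r..<k. (\<sigma> i)\<^sup>2)"
  with nested_err_lower_bound[OF U V assms(2)]
  have "(\<Sum>i=r..<k. (\<sigma> i)\<^sup>2) < nested_err U V r"
    by simp
  then have "(\<Sum>r=1..k. \<Sum>i=r..<k. (\<sigma> i)\<^sup>2) < (\<Sum>r=1..k. nested_err U V r)"
    using assms(2) nested_err_lower_bound[OF U V] by (intro sum_strict_mono_strong) auto
  with le show False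
    by simp
qed

lemma err_E_eq_0_if_nested_err_tight:
  assumes U: "U \<in> carrier_mat m k" and V: "V \<in> carrier_mat n k" and r: "r \<in> {1..k}"
    and tight: "nested_err U V r = (\<Sum>i=r..<k. (\<sigma> i)\<^sup>2)"
  shows "err_E k U V (trunc_svd m n P Q \<sigma> r) r = 0"
proof -
  let ?A = "trunc_svd m n P Q \<sigma> r"
  have "?A \<in> carrier_mat m n"
    by (simp add: trunc_svd_def)
  then have "(frob_norm (U * sel_mat k {0..<r} * transpose_mat V - ?A))\<^sup>2 =
      sum_sq m n (\<lambda>a b. ?A $$ (a, b) - (\<Sum>l<r. U $$ (a, l) * V $$ (b, l)))"
    using r by (intro frob_norm_nested_diff_sq[OF U V]) auto
  also have "\<dots> = 0"
  proof -
    have "sum_sq m n (\<lambda>a b. (\<Sum>i<k. \<sigma> i * P $$ (a, i) * Q $$ (b, i)) -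
        (\<Sum>l<r. U $$ (a, l) * V $$ (b, l))) = (\<Sum>i=r..<k. (\<sigma> i)\<^sup>2)"
      using tight r by (simp add: nested_err_eq_sum_sq[OF U V])
    from eckart_young_eq[OF P_cols_orthonormal Q_cols_orthonormal _ _ this] r
    show ?thesis
      by (simp add: sum_sq_eq_0_iff trunc_svd_def)
  qed
  finally have "(frob_norm (U * sel_mat k {0..<r} * transpose_mat V - ?A))\<^sup>2 = 0" .
  moreover have "finite {(frob_norm (U * sel_mat k S * transpose_mat V - ?A))\<^sup>2 | S.
      S \<subseteq> {0..<k} \<and> card S = r}"
    by (rule finite_image_set) simp
  ultimately show ?thesis
    unfolding err_E_def using r by (intro Min_eqI) auto
qed

end

theorem theorem4p3:
  fixes m n k :: nat and Mstar P Q :: "real mat" and \<sigma> :: "nat \<Rightarrow> real"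
  assumes "m \<ge> 1" and "n \<ge> 1" and "k = min m n"
    and "Mstar \<in> carrier_mat m n"
    and "P \<in> carrier_mat m k" and "Q \<in> carrier_mat n k"
    and "transpose_mat P * P = 1\<^sub>m k" and "transpose_mat Q * Q = 1\<^sub>m k"
    and "Mstar = P * diag_sv k \<sigma> * transpose_mat Q"
    and "\<And>i j. i < j \<Longrightarrow> j < k \<Longrightarrow> \<sigma> i > \<sigma> j"
    and "\<And>i. i < k \<Longrightarrow> \<sigma> i > 0"
  shows "\<forall>(U,V) \<in> M_NSL m n k Mstar. \<forall>r \<in> {1..k}. err_E k U V (trunc_svd m n P Q \<sigma> r) r = 0"
proof -
  interpret svd_factors k \<sigma> m n P Q
    using assms(5-8,10,11) by unfold_locales auto
  show ?thesis
    using nsl_minimizer_nested_err err_E_eq_0_if_nested_err_tight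
    by (auto simp: assms(9) M_NSL_def)
qed

end
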